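(* Let $P$ be the set of ordered pairs $(x,y)$ of integers with $x\ge y\ge 0$. Let $Q$ be the set of quadruples $(v;r,s;\lambda)$ of integers satisfying $$\lambda(v-1)=r(r-1)+s(s-1),\qquad v=2n+1 \text{ where } n=r+s-\lambda,\qquad v/2\ge r\ge s\ge 0.$$ Then the map $P\to Q$ given by $$v=1+x(x+1)+y(y+1),\quad r=\binom{x+1}{2}+\binom{y}{2},\quad s=\binom{x}{2}+\binom{y+1}{2},\quad \lambda=\binom{x}{2}+\binom{y}{2}$$ is well defined (its values lie in $Q$) and is a bijection from $P$ onto $Q$.
   Context: $Q$ is the set of normalized feasible parameter sets of "D-optimal" supplementary difference sets with two base blocks. Binomial coefficients are the usual ones, with $\binom{k}{2}=k(k-1)/2$ (so $\binom{0}{2}=\binom{1}{2}=0$). *)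

theory Defs
  imports Complex_Main
begin

definition P_set :: "(int \<times> int) set" where
  "P_set = {(x, y). x \<ge> y \<and> y \<ge> 0}"

definition Q_set :: "(int \<times> int \<times> int \<times> int) set" where
  "Q_set = {(v, r, s, lam). lam * (v - 1) = r * (r - 1) + s * (s - 1)
      \<and> v = 2 * (r + s - lam) + 1
      \<and> real_of_int v / 2 \<ge> real_of_int r \<and> r \<ge> s \<and> s \<ge> 0}"

text \<open>Binomial coefficient C(k,2) for integers k >= 0 (arguments are nonnegative on P).\<close>
definition binom2 :: "int \<Rightarrow> int" where
  "binom2 k = int (nat k choose 2)"

definition phi :: "int \<times> int \<Rightarrow> int \<times> int \<times> int \<times> int" where
  "phi p = (case p of (x, y) \<Rightarrow>
     (1 + x * (x + 1) + y * (y + 1),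
      binom2 (x + 1) + binom2 y,
      binom2 x + binom2 (y + 1),
      binom2 x + binom2 y))"

end

theory Submission
  imports Defs
begin

(* Writing a = r - lam and
   b = s - lam, the condition v = 2(r + s - lam) + 1 says that every element
   of Q has the shape
       quad a b lam = (2(a + b + lam) + 1, a + lam, b + lam, lam),
   and for quadruples of this shape the defining equation of Q collapses to
   2 lam = a(a-1) + b(b-1), while the inequalities v/2 >= r >= s >= 0 become
   a >= b >= 0.  Since 2 C(k,2) = k(k-1), the last equation says precisely
   lam = C(a,2) + C(b,2).  On the other hand phi(x,y) is quad x y applied to
   C(x,2) + C(y,2), because C(k+1,2) = C(k,2) + k.  So phi is the composite of
   the bijection (x,y) |-> (x, y, C(x,2) + C(y,2)) from P onto the admissible
   parameter triples with the injective map quad, whose image is Q. *)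

(* Pascal's rule C(k+1,2) = C(k,2) + C(k,1): links the r- and s-components of phi to its lam-component. *)
lemma binom2_Suc:
  assumes "k \<ge> 0"
  shows "binom2 (k + 1) = binom2 k + k"
proof -
  have "nat (k + 1) = Suc (nat k)" using assms by simp
  then have "binom2 (k + 1) = int (Suc (nat k) choose Suc 1)"
    by (simp add: binom2_def numeral_2_eq_2)
  also have "\<dots> = int (nat k choose 1) + int (nat k choose 2)"
    by (simp add: numeral_2_eq_2)
  also have "\<dots> = binom2 k + k" using assms by (simp add: binom2_def)
  finally show ?thesis .
qed

(* The closed form 2 C(k,2) = k(k-1): turns the quadratic equation of Q into a statement about C(.,2). *)
lemma binom2_double:
  assumes "k \<ge> 0"
  shows "2 * binom2 k = k * (k - 1)"
  using assms
proof (induction k rule: int_ge_induct)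
  case base
  then show ?case by (simp add: binom2_def)
next
  case (step k)
  then show ?case using binom2_Suc[of k] by (simp add: algebra_simps)
qed

definition quad :: "int \<Rightarrow> int \<Rightarrow> int \<Rightarrow> int \<times> int \<times> int \<times> int" where
  "quad a b lam = (2 * (a + b + lam) + 1, a + lam, b + lam, lam)"

lemma quad_inject: "quad a b lam = quad a' b' lam' \<longleftrightarrow> a = a' \<and> b = b' \<and> lam = lam'"
  by (auto simp: quad_def)

lemma quad_equation_iff:
  fixes a b lam :: int
  shows "lam * (2 * (a + b + lam)) = (a + lam) * (a + lam - 1) + (b + lam) * (b + lam - 1)
     \<longleftrightarrow> 2 * lam = a * (a - 1) + b * (b - 1)"
proof -
  have "(a + lam) * (a + lam - 1) + (b + lam) * (b + lam - 1)
        = lam * (2 * (a + b + lam)) + (a * (a - 1) + b * (b - 1) - 2 * lam)"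
    by (simp add: algebra_simps)
  then show ?thesis by linarith
qed

(* a(a-1) >= 0 for every integer a; hence lam >= 0 whenever 2 lam = a(a-1) + b(b-1). *)
lemma pronic_nonneg: "(a :: int) * (a - 1) \<ge> 0"
  by (cases "a \<ge> 1") (auto intro: mult_nonpos_nonpos)

lemma Q_set_quad:
  "Q_set = {quad a b lam | a b lam. b \<ge> 0 \<and> a \<ge> b \<and> 2 * lam = a * (a - 1) + b * (b - 1)}"
proof (intro set_eqI iffI)
  fix q assume "q \<in> Q_set"
  then obtain v r s lam where q: "q = (v, r, s, lam)"
    and eq: "lam * (v - 1) = r * (r - 1) + s * (s - 1)"
    and v: "v = 2 * (r + s - lam) + 1"
    and half: "real_of_int v / 2 \<ge> real_of_int r" and rs: "r \<ge> s"
    by (auto simp: Q_set_def)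
  define a b where "a = r - lam" and "b = s - lam"
  have q_quad: "q = quad a b lam" using q v by (simp add: quad_def a_def b_def)
  have "v \<ge> 2 * r" using half by linarith
  then have "b \<ge> 0" using v by (simp add: b_def)
  moreover have "a \<ge> b" using rs by (simp add: a_def b_def)
  moreover have "2 * lam = a * (a - 1) + b * (b - 1)"
    using eq v quad_equation_iff[of lam a b] by (simp add: a_def b_def algebra_simps)
  ultimately show "q \<in> {quad a b lam | a b lam. b \<ge> 0 \<and> a \<ge> b \<and> 2 * lam = a * (a - 1) + b * (b - 1)}"
    using q_quad by blast
next
  fix q assume "q \<in> {quad a b lam | a b lam. b \<ge> 0 \<and> a \<ge> b \<and> 2 * lam = a * (a - 1) + b * (b - 1)}"
  then obtain a b lam where q: "q = quad a b lam" and b: "b \<ge> 0" and ab: "a \<ge> b"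
    and eq: "2 * lam = a * (a - 1) + b * (b - 1)"
    by blast
  have lam: "lam \<ge> 0" using eq pronic_nonneg[of a] pronic_nonneg[of b] by linarith
  have "real_of_int (2 * (a + b + lam) + 1) / 2 \<ge> real_of_int (a + lam)" using b by simp
  then show "q \<in> Q_set"
    using q ab b lam eq quad_equation_iff[of lam a b]
    by (simp add: Q_set_def quad_def algebra_simps)
qed

lemma phi_quad:
  assumes "x \<ge> 0" "y \<ge> 0"
  shows "phi (x, y) = quad x y (binom2 x + binom2 y)"
  using assms binom2_Suc[of x] binom2_Suc[of y] binom2_double[of x] binom2_double[of y]
  by (simp add: phi_def quad_def algebra_simps)

lemma quad_equation_binom2:
  assumes "a \<ge> 0" "b \<ge> 0"
  shows "2 * lam = a * (a - 1) + b * (b - 1) \<longleftrightarrow> lam = binom2 a + binom2 b"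
  using binom2_double[OF assms(1)] binom2_double[OF assms(2)] by linarith

lemma phi_image_P: "phi ` P_set = Q_set"
proof -
  have "phi ` P_set = (\<lambda>(a, b). quad a b (binom2 a + binom2 b)) ` P_set"
    by (intro image_cong) (auto simp: P_set_def phi_quad)
  also have "\<dots> = Q_set"
  proof (intro equalityI subsetI)
    fix q assume "q \<in> (\<lambda>(a, b). quad a b (binom2 a + binom2 b)) ` P_set"
    then obtain a b where "q = quad a b (binom2 a + binom2 b)" "b \<ge> 0" "a \<ge> b"
      by (auto simp: P_set_def)
    then show "q \<in> Q_set"
      unfolding Q_set_quad using quad_equation_binom2[of a b] by fastforce
  next
    fix q assume "q \<in> Q_set"
    then obtain a b lam where q: "q = quad a b lam" and ab: "b \<ge> 0" "a \<ge> b"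
      and eq: "2 * lam = a * (a - 1) + b * (b - 1)"
      unfolding Q_set_quad by blast
    have "lam = binom2 a + binom2 b" using quad_equation_binom2[of a b lam] eq ab by simp
    moreover have "(a, b) \<in> P_set" using ab by (simp add: P_set_def)
    ultimately show "q \<in> (\<lambda>(a, b). quad a b (binom2 a + binom2 b)) ` P_set"
      using q by force
  qed
  finally show ?thesis .
qed

lemma inj_on_phi_P: "inj_on phi P_set"
  by (rule inj_onI) (auto simp: P_set_def phi_quad quad_inject)

theorem proposition1:
  shows "phi ` P_set \<subseteq> Q_set \<and> bij_betw phi P_set Q_set"
  using phi_image_P inj_on_phi_P by (simp add: bij_betw_def)

end
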